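(* Let $n>1$. For each $k\ge1$ the set of $N\in\mathcal{G}_n$ with $\mathbb{F}_n/N$ nilpotent of class at most $k$ is clopen, and the set $\{N\in\mathcal{G}_n:\mathbb{F}_n/N\text{ is nilpotent}\}$ is $\mathbf{\Sigma}^0_1$-complete.
   Context: $\mathbb{F}_n$ is the free group on $\gamma_1,\dots,\gamma_n$. $\mathcal{G}_n$ is the set of normal subgroups $N\trianglelefteq\mathbb{F}_n$, viewed as a subset of $\{0,1\}^{\mathbb{F}_n}$ with the subspace topology of the product of discrete topologies (a compact zero-dimensional Polish space). $\mathbf{\Sigma}^0_1$ = open sets. $A\subseteq X$ is $\mathbf{\Sigma}^0_1$-complete if it is open and for every zero-dimensional Polish space $Y$ and every open $B\subseteq Y$ there is a continuous $f:Y\to X$ with $f^{-1}[A]=B$. *)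

theory Defs
  imports "HOL-Analysis.Analysis" "HOL-Algebra.Algebra"
begin

text \<open>Words over letters (i, b): (i, True) stands for gamma_(i+1), (i, False) for its inverse,
  with 0 <= i < n.\<close>

type_synonym fg_word = "(nat \<times> bool) list"

definition letter_inv :: "nat \<times> bool \<Rightarrow> nat \<times> bool" where
  "letter_inv x = (fst x, \<not> snd x)"

fun cancel_cons :: "nat \<times> bool \<Rightarrow> fg_word \<Rightarrow> fg_word" where
  "cancel_cons x [] = [x]"
| "cancel_cons x (y # ys) = (if y = letter_inv x then ys else x # y # ys)"

definition reduce :: "fg_word \<Rightarrow> fg_word" where
  "reduce w = foldr cancel_cons w []"

fun reduced :: "fg_word \<Rightarrow> bool" where
  "reduced (x # y # ys) = (y \<noteq> letter_inv x \<and> reduced (y # ys))"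
| "reduced _ = True"

definition free_group :: "nat \<Rightarrow> fg_word monoid" where
  "free_group n = \<lparr> carrier = {w. reduced w \<and> (\<forall>x\<in>set w. fst x < n)},
                    mult = (\<lambda>u v. reduce (u @ v)),
                    one = [] \<rparr>"

text \<open>lower_central G 0 = G (= gamma_1), lower_central G (Suc i) = [gamma_(i+1), G].\<close>

fun lower_central :: "('a, 'b) monoid_scheme \<Rightarrow> nat \<Rightarrow> 'a set" where
  "lower_central G 0 = carrier G"
| "lower_central G (Suc i) =
     generate G (\<Union>h1 \<in> lower_central G i. \<Union>h2 \<in> carrier G.
        { h1 \<otimes>\<^bsub>G\<^esub> h2 \<otimes>\<^bsub>G\<^esub> inv\<^bsub>G\<^esub> h1 \<otimes>\<^bsub>G\<^esub> inv\<^bsub>G\<^esub> h2 })"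

definition nilpotent_class_le :: "('a, 'b) monoid_scheme \<Rightarrow> nat \<Rightarrow> bool" where
  "nilpotent_class_le G k \<longleftrightarrow> lower_central G k = {\<one>\<^bsub>G\<^esub>}"

definition nilpotent_grp :: "('a, 'b) monoid_scheme \<Rightarrow> bool" where
  "nilpotent_grp G \<longleftrightarrow> (\<exists>k. nilpotent_class_le G k)"

text \<open>A subset of F_n is encoded by its characteristic function fg_word \<Rightarrow> bool
  (false outside F_n).  The ambient space is the product of discrete spaces;
  since all points of G_n vanish off F_n, this is homeomorphic to {0,1}^F_n restricted to G_n.\<close>

definition Gn_points :: "nat \<Rightarrow> (fg_word \<Rightarrow> bool) set" where
  "Gn_points n = {P. normal {w. P w} (free_group n)}"

definition Gn_top :: "nat \<Rightarrow> (fg_word \<Rightarrow> bool) topology" where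
  "Gn_top n = subtopology (product_topology (\<lambda>_. discrete_topology (UNIV :: bool set)) UNIV)
                          (Gn_points n)"

definition Polish_top :: "'a topology \<Rightarrow> bool" where
  "Polish_top Z \<longleftrightarrow> completely_metrizable_space Z \<and> separable_space Z"

definition zero_dim_Polish :: "'a topology \<Rightarrow> bool" where
  "zero_dim_Polish Z \<longleftrightarrow> Polish_top Z \<and> Z dim_le 0"

definition clopenin :: "'a topology \<Rightarrow> 'a set \<Rightarrow> bool" where
  "clopenin T U \<longleftrightarrow> openin T U \<and> closedin T U"

text \<open>Sigma^0_1-completeness, relative to zero-dimensional Polish spaces carried by type 'y.
  In the main theorem 'y is a free (hence universally quantified) type variable.\<close>
definition Sigma01_complete :: "'y itself \<Rightarrow> 'a topology \<Rightarrow> 'a set \<Rightarrow> bool" where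
  "Sigma01_complete _ T S \<longleftrightarrow> openin T S \<and>
     (\<forall>(Z :: 'y topology) U. zero_dim_Polish Z \<and> openin Z U \<longrightarrow>
        (\<exists>f. continuous_map Z T f \<and> {y \<in> topspace Z. f y \<in> S} = U))"

end

theory Submission
  imports Defs
begin

(*
  Write lower_central F k for the (k+1)-st term of the lower central series of F = F_n.  Since the
  generators generate F, a normal subgroup N contains lower_central F k iff it contains the finitely
  many left-normed commutators of length k + 1 in the generators.  So "F/N has class at most k" is
  a clopen condition on N, and "F/N is nilpotent", the union over k, is open.

  For completeness, write an open subset U of a zero-dimensional Polish space as a union of clopen
  sets V_0, V_1, ... and send y to lower_central F i for the least i with y in V_i, and to the
  intersection of the whole series if y is not in U.  As the series decreases, this map is
  continuous, and outside U its values have non-nilpotent quotients: for n >= 2 the lower central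
  series of F never stabilises, as the map onto the infinite dihedral group shows, whose k-th term
  consists of the translations by multiples of 2^k.
*)

section \<open>The free group\<close>

lemma letter_inv_letter_inv [simp]: "letter_inv (letter_inv x) = x"
  by (simp add: letter_inv_def)

lemma fst_letter_inv [simp]: "fst (letter_inv x) = fst x"
  by (simp add: letter_inv_def)

lemma reduced_Cons_tl: "reduced (x # ys) \<Longrightarrow> reduced ys"
  by (cases ys) auto

lemma reduced_cancel_cons: "reduced ys \<Longrightarrow> reduced (cancel_cons x ys)"
  by (cases ys) (auto dest: reduced_Cons_tl)

lemma reduced_foldr_cancel_cons: "reduced ys \<Longrightarrow> reduced (foldr cancel_cons w ys)"
  by (induction w) (auto intro: reduced_cancel_cons)

lemma reduced_reduce: "reduced (reduce w)"
  by (simp add: reduce_def reduced_foldr_cancel_cons)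

lemma cancel_cons_reduced: "reduced (x # w) \<Longrightarrow> cancel_cons x w = x # w"
  by (cases w) auto

lemma reduce_reduced: "reduced w \<Longrightarrow> reduce w = w"
proof (induction w)
  case (Cons x w)
  then have "reduce w = w"
    by (blast dest: reduced_Cons_tl)
  with Cons.prems show ?case
    by (simp add: reduce_def cancel_cons_reduced)
qed (simp add: reduce_def)

lemma reduce_idem [simp]: "reduce (reduce w) = reduce w"
  by (simp add: reduce_reduced reduced_reduce)

lemma reduce_append: "reduce (u @ v) = foldr cancel_cons u (reduce v)"
  by (simp add: reduce_def)

lemma cancel_cons_cancel_cons_letter_inv:
  "reduced ys \<Longrightarrow> cancel_cons x (cancel_cons (letter_inv x) ys) = ys"
  by (cases ys) (auto simp: cancel_cons_reduced)

lemma foldr_cancel_cons_cancel_cons: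
  assumes "reduced ys"
  shows "foldr cancel_cons (cancel_cons x r) ys = cancel_cons x (foldr cancel_cons r ys)"
proof (cases r)
  case (Cons y r')
  then show ?thesis
    using cancel_cons_cancel_cons_letter_inv[of "foldr cancel_cons r' ys" x] assms
    by (auto simp: reduced_foldr_cancel_cons)
qed simp

lemma foldr_cancel_cons_reduce:
  "reduced ys \<Longrightarrow> foldr cancel_cons (reduce w) ys = foldr cancel_cons w ys"
  by (induction w) (simp_all add: reduce_def foldr_cancel_cons_cancel_cons)

lemma reduce_append_reduce_left [simp]: "reduce (reduce u @ v) = reduce (u @ v)"
  by (simp add: reduce_append foldr_cancel_cons_reduce reduced_reduce)

lemma reduce_append_reduce_right [simp]: "reduce (u @ reduce v) = reduce (u @ v)"
  by (simp add: reduce_append)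

definition word_inv :: "fg_word \<Rightarrow> fg_word" where
  "word_inv w = rev (map letter_inv w)"

lemma set_word_inv [simp]: "set (word_inv w) = letter_inv ` set w"
  by (simp add: word_inv_def)

lemma foldr_cancel_cons_append_word_inv:
  "reduced ys \<Longrightarrow> foldr cancel_cons (w @ word_inv w) ys = ys"
proof (induction w arbitrary: ys)
  case (Cons x w)
  have "foldr cancel_cons ((x # w) @ word_inv (x # w)) ys
      = cancel_cons x (foldr cancel_cons (w @ word_inv w) (cancel_cons (letter_inv x) ys))"
    by (simp add: word_inv_def)
  also have "\<dots> = ys"
    using Cons reduced_cancel_cons cancel_cons_cancel_cons_letter_inv by simp
  finally show ?case .
qed (simp add: word_inv_def)

lemma reduce_word_inv_append [simp]: "reduce (word_inv w @ w) = []"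
  using foldr_cancel_cons_append_word_inv[of "[]" "word_inv w"]
  by (simp add: reduce_def word_inv_def rev_map comp_def)

lemma set_cancel_cons: "set (cancel_cons x ys) \<subseteq> insert x (set ys)"
  by (cases ys) auto

lemma set_reduce: "set (reduce w) \<subseteq> set w"
proof -
  have "set (foldr cancel_cons w ys) \<subseteq> set w \<union> set ys" for ys
    by (induction w) (use set_cancel_cons in fastforce)+
  from this[of "[]"] show ?thesis
    by (simp add: reduce_def)
qed

lemma carrier_free_group: "carrier (free_group n) = {w. reduced w \<and> (\<forall>x\<in>set w. fst x < n)}"
  by (simp add: free_group_def)

lemma mult_free_group: "x \<otimes>\<^bsub>free_group n\<^esub> y = reduce (x @ y)"
  by (simp add: free_group_def)

lemma one_free_group [simp]: "\<one>\<^bsub>free_group n\<^esub> = []"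
  by (simp add: free_group_def)

lemma reduce_in_carrier_free_group:
  "\<forall>x\<in>set w. fst x < n \<Longrightarrow> reduce w \<in> carrier (free_group n)"
  using set_reduce by (fastforce simp: carrier_free_group reduced_reduce)

lemma word_inv_in_carrier_free_group:
  "w \<in> carrier (free_group n) \<Longrightarrow> reduce (word_inv w) \<in> carrier (free_group n)"
  by (intro reduce_in_carrier_free_group) (auto simp: carrier_free_group)

lemma group_free_group: "group (free_group n)"
proof (rule groupI)
  fix x y
  assume "x \<in> carrier (free_group n)" "y \<in> carrier (free_group n)"
  then show "x \<otimes>\<^bsub>free_group n\<^esub> y \<in> carrier (free_group n)"
    using set_reduce[of "x @ y"] by (auto simp: carrier_free_group mult_free_group reduced_reduce)
next
  fix x
  assume x: "x \<in> carrier (free_group n)"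
  then show "\<one>\<^bsub>free_group n\<^esub> \<otimes>\<^bsub>free_group n\<^esub> x = x"
    by (simp add: carrier_free_group mult_free_group reduce_reduced)
  show "\<exists>y\<in>carrier (free_group n). y \<otimes>\<^bsub>free_group n\<^esub> x = \<one>\<^bsub>free_group n\<^esub>"
    using word_inv_in_carrier_free_group[OF x] by (force simp: mult_free_group)
qed (auto simp: carrier_free_group mult_free_group)

lemma inv_free_group:
  assumes "w \<in> carrier (free_group n)"
  shows "inv\<^bsub>free_group n\<^esub> w = reduce (word_inv w)"
  using group.inv_equality[OF group_free_group _ assms word_inv_in_carrier_free_group[OF assms]]
  by (simp add: mult_free_group)

definition free_generators :: "nat \<Rightarrow> fg_word set" where
  "free_generators n = (\<lambda>i. [(i, True)]) ` {..<n}"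

lemma finite_free_generators: "finite (free_generators n)"
  by (simp add: free_generators_def)

lemma free_generators_subset: "free_generators n \<subseteq> carrier (free_group n)"
  by (auto simp: free_generators_def carrier_free_group)

lemma generate_free_generators:
  "generate (free_group n) (free_generators n) = carrier (free_group n)"
proof
  interpret group "free_group n" by (rule group_free_group)
  show "generate (free_group n) (free_generators n) \<subseteq> carrier (free_group n)"
    by (rule generate_incl[OF free_generators_subset])
  have letter: "[x] \<in> generate (free_group n) (free_generators n)" if "fst x < n" for x
  proof -
    have gen: "[(fst x, True)] \<in> free_generators n"
      using that by (simp add: free_generators_def)
    show ?thesis
    proof (cases "snd x")
      case True
      then show ?thesis
        using gen generate.incl by (metis prod.collapse)
    next
      case False
      have "inv\<^bsub>free_group n\<^esub> [(fst x, True)] = [x]"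
        using False free_generators_subset gen
        by (subst inv_free_group) (auto simp: word_inv_def letter_inv_def reduce_def prod_eq_iff)
      then show ?thesis
        using generate.inv[OF gen, where G = "free_group n"] by simp
    qed
  qed
  show "carrier (free_group n) \<subseteq> generate (free_group n) (free_generators n)"
  proof
    fix w
    assume "w \<in> carrier (free_group n)"
    then show "w \<in> generate (free_group n) (free_generators n)"
    proof (induction w)
      case Nil
      then show ?case
        using generate.one[of "free_group n"] by simp
    next
      case (Cons x w)
      then have w: "w \<in> carrier (free_group n)" and x: "fst x < n"
        and xw: "x # w = [x] \<otimes>\<^bsub>free_group n\<^esub> w"
        by (auto simp: carrier_free_group mult_free_group reduce_reduced dest: reduced_Cons_tl)
      show ?case
        by (subst xw) (rule generate.eng[OF letter[OF x] Cons.IH[OF w]])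
    qed
  qed
qed

section \<open>The lower central series\<close>

definition commutator_set :: "('a, 'b) monoid_scheme \<Rightarrow> 'a set \<Rightarrow> 'a set \<Rightarrow> 'a set" where
  "commutator_set G A B = (\<Union>a\<in>A. \<Union>b\<in>B. {a \<otimes>\<^bsub>G\<^esub> b \<otimes>\<^bsub>G\<^esub> inv\<^bsub>G\<^esub> a \<otimes>\<^bsub>G\<^esub> inv\<^bsub>G\<^esub> b})"

lemma lower_central_Suc_commutator_set:
  "lower_central G (Suc k) = generate G (commutator_set G (lower_central G k) (carrier G))"
  by (simp add: commutator_set_def)

declare lower_central.simps(2) [simp del]

lemma commutator_set_mono:
  "A \<subseteq> A' \<Longrightarrow> B \<subseteq> B' \<Longrightarrow> commutator_set G A B \<subseteq> commutator_set G A' B'"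
  by (auto simp: commutator_set_def)

lemma finite_commutator_set: "finite A \<Longrightarrow> finite B \<Longrightarrow> finite (commutator_set G A B)"
  by (simp add: commutator_set_def)

lemma commutator_set_subset_iff:
  "commutator_set G A B \<subseteq> S
     \<longleftrightarrow> (\<forall>a\<in>A. \<forall>b\<in>B. a \<otimes>\<^bsub>G\<^esub> b \<otimes>\<^bsub>G\<^esub> inv\<^bsub>G\<^esub> a \<otimes>\<^bsub>G\<^esub> inv\<^bsub>G\<^esub> b \<in> S)"
  by (auto simp: commutator_set_def)

context group
begin

lemma commutator_set_subset_carrier:
  "A \<subseteq> carrier G \<Longrightarrow> B \<subseteq> carrier G \<Longrightarrow> commutator_set G A B \<subseteq> carrier G"
  by (auto simp: commutator_set_def subset_iff)

lemma mult_inv_cancel_left: "x \<in> carrier G \<Longrightarrow> y \<in> carrier G \<Longrightarrow> x \<otimes> (inv x \<otimes> y) = y"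
  by (simp add: m_assoc[symmetric])

lemma inv_mult_cancel_left: "x \<in> carrier G \<Longrightarrow> y \<in> carrier G \<Longrightarrow> inv x \<otimes> (x \<otimes> y) = y"
  by (simp add: m_assoc[symmetric])

lemmas commutator_simps = m_assoc inv_mult_group mult_inv_cancel_left inv_mult_cancel_left

lemma commutator_mult_right:
  assumes "c \<in> carrier G" "a \<in> carrier G" "b \<in> carrier G"
  shows "c \<otimes> (a \<otimes> b) \<otimes> inv c \<otimes> inv (a \<otimes> b)
       = (c \<otimes> a \<otimes> inv c \<otimes> inv a) \<otimes> (a \<otimes> (c \<otimes> b \<otimes> inv c \<otimes> inv b) \<otimes> inv a)"
  using assms by (simp add: commutator_simps)

lemma commutator_inv_right:
  assumes "c \<in> carrier G" "b \<in> carrier G"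
  shows "c \<otimes> inv b \<otimes> inv c \<otimes> inv (inv b) = inv b \<otimes> inv (c \<otimes> b \<otimes> inv c \<otimes> inv b) \<otimes> b"
  using assms by (simp add: commutator_simps)

lemma commutator_split:
  assumes "a \<in> carrier G" "b \<in> carrier G"
  shows "a \<otimes> b \<otimes> inv a \<otimes> inv b = a \<otimes> (b \<otimes> inv a \<otimes> inv b)"
  using assms by (simp add: m_assoc)

lemma conj_commutator:
  assumes "g \<in> carrier G" "a \<in> carrier G" "b \<in> carrier G"
  shows "g \<otimes> (a \<otimes> b \<otimes> inv a \<otimes> inv b) \<otimes> inv g
     = (g \<otimes> a \<otimes> inv g) \<otimes> (g \<otimes> b \<otimes> inv g) \<otimes> inv (g \<otimes> a \<otimes> inv g) \<otimes> inv (g \<otimes> b \<otimes> inv g)"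
  using assms by (simp add: commutator_simps)

lemma inv_commutator:
  assumes "a \<in> carrier G" "b \<in> carrier G"
  shows "inv (a \<otimes> b \<otimes> inv a \<otimes> inv b) = b \<otimes> a \<otimes> inv b \<otimes> inv a"
  using assms by (simp add: commutator_simps)

lemma lower_central_normal: "lower_central G k \<lhd> G"
proof (induction k)
  case 0
  then show ?case
    by (simp add: normal_self)
next
  case (Suc k)
  interpret L: normal "lower_central G k" G
    by (rule Suc)
  show ?case
    unfolding lower_central_Suc_commutator_set
  proof (rule normal_generateI)
    show "commutator_set G (lower_central G k) (carrier G) \<subseteq> carrier G"
      by (simp add: commutator_set_subset_carrier L.subset)
    fix h g
    assume "h \<in> commutator_set G (lower_central G k) (carrier G)" and g: "g \<in> carrier G"
    then obtain a b where a: "a \<in> lower_central G k" and b: "b \<in> carrier G"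
      and h: "h = a \<otimes> b \<otimes> inv a \<otimes> inv b"
      by (auto simp: commutator_set_def)
    have "g \<otimes> a \<otimes> inv g \<in> lower_central G k"
      using L.inv_op_closed2[OF g a] .
    then show "g \<otimes> h \<otimes> inv g \<in> commutator_set G (lower_central G k) (carrier G)"
      using conj_commutator[OF g L.mem_carrier[OF a] b] g b h
      by (auto simp: commutator_set_def)
  qed
qed

lemma lower_central_subset_carrier: "lower_central G k \<subseteq> carrier G"
  using lower_central_normal normal_imp_subgroup subgroup.subset by blast

lemma lower_central_Suc_subset: "lower_central G (Suc k) \<subseteq> lower_central G k"
proof -
  interpret L: normal "lower_central G k" G
    by (rule lower_central_normal)
  have "commutator_set G (lower_central G k) (carrier G) \<subseteq> lower_central G k"
    unfolding commutator_set_subset_iff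
    using commutator_split L.inv_op_closed2 L.m_closed L.mem_carrier by auto
  then show ?thesis
    unfolding lower_central_Suc_commutator_set
    by (rule generate_subgroup_incl[OF _ L.subgroup_axioms])
qed

lemma decseq_lower_central: "decseq (lower_central G)"
  using lower_central_Suc_subset by (rule decseq_SucI)

lemma normal_INT: "(\<And>i. N i \<lhd> G) \<Longrightarrow> (\<Inter>i. N i) \<lhd> G"
  by (rule normal_invI)
    (auto intro: subgroups_Inter normal_imp_subgroup normal.inv_op_closed2)

end

lemma (in group_hom) image_commutator_set:
  assumes "A \<subseteq> carrier G" "B \<subseteq> carrier G"
  shows "h ` commutator_set G A B = commutator_set H (h ` A) (h ` B)"
proof -
  have "h (a \<otimes> b \<otimes> inv a \<otimes> inv b) = h a \<otimes>\<^bsub>H\<^esub> h b \<otimes>\<^bsub>H\<^esub> inv\<^bsub>H\<^esub> h a \<otimes>\<^bsub>H\<^esub> inv\<^bsub>H\<^esub> h b"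
    if "a \<in> A" "b \<in> B" for a b
    using that assms by (auto simp: subsetD)
  then show ?thesis
    unfolding commutator_set_def by (auto simp: image_UN)
qed

lemma (in group_hom) image_lower_central_subset: "h ` lower_central G k \<subseteq> lower_central H k"
proof (induction k)
  case (Suc k)
  have "h ` lower_central G (Suc k) = generate H (h ` commutator_set G (lower_central G k) (carrier G))"
    unfolding lower_central_Suc_commutator_set
    by (simp add: generate_img G.commutator_set_subset_carrier G.lower_central_subset_carrier)
  also have "\<dots> = generate H (commutator_set H (h ` lower_central G k) (h ` carrier G))"
    by (simp add: image_commutator_set G.lower_central_subset_carrier)
  also have "\<dots> \<subseteq> lower_central H (Suc k)"
    unfolding lower_central_Suc_commutator_set
    using Suc by (intro H.mono_generate commutator_set_mono) auto
  finally show ?case .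
qed auto

lemma (in group_hom) image_lower_central_surj:
  assumes "h ` carrier G = carrier H"
  shows "h ` lower_central G k = lower_central H k"
proof (induction k)
  case (Suc k)
  have "h ` lower_central G (Suc k) = generate H (h ` commutator_set G (lower_central G k) (carrier G))"
    unfolding lower_central_Suc_commutator_set
    by (simp add: generate_img G.commutator_set_subset_carrier G.lower_central_subset_carrier)
  also have "\<dots> = lower_central H (Suc k)"
    unfolding lower_central_Suc_commutator_set
    by (simp add: image_commutator_set G.lower_central_subset_carrier Suc assms)
  finally show ?case .
qed (simp add: assms)

lemma (in normal) nilpotent_class_le_Mod_iff:
  "nilpotent_class_le (G Mod H) k \<longleftrightarrow> lower_central G k \<subseteq> H"
proof -
  interpret Q: group_hom G "G Mod H" "\<lambda>a. H #> a"
    by (simp add: group_hom_def group_hom_axioms_def factorgroup_is_group r_coset_hom_Mod is_group)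
  have L: "lower_central (G Mod H) k = (\<lambda>a. H #> a) ` lower_central G k"
    by (rule Q.image_lower_central_surj[symmetric]) (simp add: carrier_FactGroup)
  have "H #> a = H \<longleftrightarrow> a \<in> H" if "a \<in> lower_central G k" for a
    using that lower_central_subset_carrier coset_join1 coset_join2 subgroup_axioms by blast
  moreover have "\<one> \<in> lower_central G k"
    using lower_central_normal normal_imp_subgroup subgroup.one_closed by blast
  ultimately show ?thesis
    unfolding nilpotent_class_le_def L by auto
qed

lemma (in normal) nilpotent_grp_Mod_iff:
  "nilpotent_grp (G Mod H) \<longleftrightarrow> (\<exists>k. lower_central G k \<subseteq> H)"
  by (simp add: nilpotent_grp_def nilpotent_class_le_Mod_iff)

section \<open>Commutators of generators\<close>

fun iterated_commutators :: "('a, 'b) monoid_scheme \<Rightarrow> 'a set \<Rightarrow> nat \<Rightarrow> 'a set" where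
  "iterated_commutators G Y 0 = Y"
| "iterated_commutators G Y (Suc k) = commutator_set G (iterated_commutators G Y k) Y"

lemma finite_iterated_commutators: "finite Y \<Longrightarrow> finite (iterated_commutators G Y k)"
  by (induction k) (simp_all add: finite_commutator_set)

lemma (in group) iterated_commutators_subset_lower_central:
  assumes "Y \<subseteq> carrier G"
  shows "iterated_commutators G Y k \<subseteq> lower_central G k"
proof (induction k)
  case (Suc k)
  have "commutator_set G (iterated_commutators G Y k) Y
      \<subseteq> commutator_set G (lower_central G k) (carrier G)"
    using Suc assms by (rule commutator_set_mono)
  then show ?case
    unfolding lower_central_Suc_commutator_set by (auto intro: generate.incl)
qed (simp add: assms)

definition central_mod :: "('a, 'b) monoid_scheme \<Rightarrow> 'a set \<Rightarrow> 'a set" where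
  "central_mod G N =
     {g \<in> carrier G. \<forall>x\<in>carrier G. g \<otimes>\<^bsub>G\<^esub> x \<otimes>\<^bsub>G\<^esub> inv\<^bsub>G\<^esub> g \<otimes>\<^bsub>G\<^esub> inv\<^bsub>G\<^esub> x \<in> N}"

context normal
begin

lemma subgroup_commutator_in:
  assumes c: "c \<in> carrier G"
  shows "subgroup {g \<in> carrier G. c \<otimes> g \<otimes> inv c \<otimes> inv g \<in> H} G"
proof (rule subgroupI)
  fix a
  assume "a \<in> {g \<in> carrier G. c \<otimes> g \<otimes> inv c \<otimes> inv g \<in> H}"
  then have a: "a \<in> carrier G" "c \<otimes> a \<otimes> inv c \<otimes> inv a \<in> H"
    by auto
  have "inv a \<otimes> inv (c \<otimes> a \<otimes> inv c \<otimes> inv a) \<otimes> a \<in> H"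
    using inv_op_closed1[OF a(1) m_inv_closed[OF a(2)]] .
  then show "inv a \<in> {g \<in> carrier G. c \<otimes> g \<otimes> inv c \<otimes> inv g \<in> H}"
    using commutator_inv_right[OF c a(1)] a(1) by simp
  fix b
  assume "b \<in> {g \<in> carrier G. c \<otimes> g \<otimes> inv c \<otimes> inv g \<in> H}"
  then have b: "b \<in> carrier G" "c \<otimes> b \<otimes> inv c \<otimes> inv b \<in> H"
    by auto
  have "a \<otimes> (c \<otimes> b \<otimes> inv c \<otimes> inv b) \<otimes> inv a \<in> H"
    using inv_op_closed2[OF a(1) b(2)] .
  then show "a \<otimes> b \<in> {g \<in> carrier G. c \<otimes> g \<otimes> inv c \<otimes> inv g \<in> H}"
    using commutator_mult_right[OF c a(1) b(1)] a b m_closed by simp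
next
  have "\<one> \<in> {g \<in> carrier G. c \<otimes> g \<otimes> inv c \<otimes> inv g \<in> H}"
    using c one_closed by simp
  then show "{g \<in> carrier G. c \<otimes> g \<otimes> inv c \<otimes> inv g \<in> H} \<noteq> {}"
    by blast
qed auto

lemma central_mod_normal: "central_mod G H \<lhd> G"
proof (rule normal_invI)
  have "central_mod G H
      = carrier G \<inter> (\<Inter>x\<in>carrier G. {g \<in> carrier G. x \<otimes> g \<otimes> inv x \<otimes> inv g \<in> H})"
  proof -
    have "g \<otimes> x \<otimes> inv g \<otimes> inv x \<in> H \<longleftrightarrow> x \<otimes> g \<otimes> inv x \<otimes> inv g \<in> H"
      if "g \<in> carrier G" "x \<in> carrier G" for g x
      using that by (metis inv_commutator m_inv_closed)
    then show ?thesis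
      unfolding central_mod_def by blast
  qed
  also have "\<dots> = \<Inter>(insert (carrier G)
                  ((\<lambda>x. {g \<in> carrier G. x \<otimes> g \<otimes> inv x \<otimes> inv g \<in> H}) ` carrier G))"
    by blast
  also have "subgroup \<dots> G"
    by (rule subgroups_Inter) (auto intro: subgroup_self subgroup_commutator_in)
  finally show "subgroup (central_mod G H) G" .
next
  fix g h
  assume g: "g \<in> carrier G" and h: "h \<in> central_mod G H"
  then have hG: "h \<in> carrier G"
    by (simp add: central_mod_def)
  have "g \<otimes> h \<otimes> inv g \<otimes> x \<otimes> inv (g \<otimes> h \<otimes> inv g) \<otimes> inv x \<in> H"
    if x: "x \<in> carrier G" for x
  proof -
    have "h \<otimes> (inv g \<otimes> x \<otimes> g) \<otimes> inv h \<otimes> inv (inv g \<otimes> x \<otimes> g) \<in> H"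
      using g h x by (simp add: central_mod_def)
    then have "g \<otimes> (h \<otimes> (inv g \<otimes> x \<otimes> g) \<otimes> inv h \<otimes> inv (inv g \<otimes> x \<otimes> g)) \<otimes> inv g \<in> H"
      using g inv_op_closed2 by blast
    then show ?thesis
      using conj_commutator[OF g hG, of "inv g \<otimes> x \<otimes> g"] g x hG by (simp add: commutator_simps)
  qed
  then show "g \<otimes> h \<otimes> inv g \<in> central_mod G H"
    using g hG by (simp add: central_mod_def)
qed

end

text \<open>An element whose commutators with the generators lie in \<open>N\<close> is central modulo \<open>N\<close>, so the
  claim for \<open>k\<close> and \<open>central_mod G N\<close> gives it for \<open>k + 1\<close> and \<open>N\<close>.\<close>

lemma (in group) lower_central_subset_iff_iterated_commutators:
  assumes Y: "Y \<subseteq> carrier G" and gen: "generate G Y = carrier G" and N: "N \<lhd> G"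
  shows "lower_central G k \<subseteq> N \<longleftrightarrow> iterated_commutators G Y k \<subseteq> N"
proof
  show "lower_central G k \<subseteq> N \<Longrightarrow> iterated_commutators G Y k \<subseteq> N"
    using iterated_commutators_subset_lower_central[OF Y] by blast
  show "iterated_commutators G Y k \<subseteq> N \<Longrightarrow> lower_central G k \<subseteq> N"
    using N
  proof (induction k arbitrary: N)
    case 0
    then have "generate G Y \<subseteq> N"
      using generate_subgroup_incl[OF _ normal_imp_subgroup] by simp
    with gen show ?case
      by simp
  next
    case (Suc k)
    interpret N: normal N G
      by (rule Suc.prems(2))
    have "c \<in> central_mod G N" if c: "c \<in> iterated_commutators G Y k" for c
    proof -
      have cG: "c \<in> carrier G"
        using c iterated_commutators_subset_lower_central[OF Y] lower_central_subset_carrier by blast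
      have "Y \<subseteq> {g \<in> carrier G. c \<otimes> g \<otimes> inv c \<otimes> inv g \<in> N}"
        using Suc.prems(1) c Y unfolding iterated_commutators.simps commutator_set_subset_iff
        by blast
      then have "carrier G \<subseteq> {g \<in> carrier G. c \<otimes> g \<otimes> inv c \<otimes> inv g \<in> N}"
        using generate_subgroup_incl[OF _ N.subgroup_commutator_in[OF cG]] gen by blast
      then show ?thesis
        using cG by (auto simp: central_mod_def)
    qed
    then have "lower_central G k \<subseteq> central_mod G N"
      using Suc.IH N.central_mod_normal by blast
    then have "commutator_set G (lower_central G k) (carrier G) \<subseteq> N"
      unfolding commutator_set_subset_iff central_mod_def by blast
    then show ?case
      unfolding lower_central_Suc_commutator_set
      by (rule generate_subgroup_incl[OF _ N.subgroup_axioms])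
  qed
qed

section \<open>The lower central series of \<open>F\<^sub>n\<close> does not stabilise\<close>

text \<open>A pair \<open>(s, m)\<close> with \<open>s = \<plusminus>1\<close> stands for the affine map \<open>x \<mapsto> s x + m\<close> of \<open>\<int>\<close>, and
  multiplication is composition.\<close>

definition infinite_dihedral :: "(int \<times> int) monoid" where
  "infinite_dihedral =
     \<lparr>carrier = {p. fst p = 1 \<or> fst p = -1},
      mult = (\<lambda>p q. (fst p * fst q, fst p * snd q + snd p)),
      one = (1, 0)\<rparr>"

lemma carrier_infinite_dihedral: "carrier infinite_dihedral = {p. fst p = 1 \<or> fst p = -1}"
  by (simp add: infinite_dihedral_def)

lemma mult_infinite_dihedral:
  "p \<otimes>\<^bsub>infinite_dihedral\<^esub> q = (fst p * fst q, fst p * snd q + snd p)"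
  by (simp add: infinite_dihedral_def)

lemma one_infinite_dihedral [simp]: "\<one>\<^bsub>infinite_dihedral\<^esub> = (1, 0)"
  by (simp add: infinite_dihedral_def)

lemma group_infinite_dihedral: "group infinite_dihedral"
proof (rule groupI)
  fix p
  assume "p \<in> carrier infinite_dihedral"
  then have "(fst p, - fst p * snd p) \<in> carrier infinite_dihedral"
    and "(fst p, - fst p * snd p) \<otimes>\<^bsub>infinite_dihedral\<^esub> p = \<one>\<^bsub>infinite_dihedral\<^esub>"
    by (auto simp: carrier_infinite_dihedral mult_infinite_dihedral)
  then show "\<exists>q\<in>carrier infinite_dihedral. q \<otimes>\<^bsub>infinite_dihedral\<^esub> p = \<one>\<^bsub>infinite_dihedral\<^esub>"
    by blast
qed (auto simp: carrier_infinite_dihedral mult_infinite_dihedral algebra_simps)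

lemma inv_infinite_dihedral:
  assumes "p \<in> carrier infinite_dihedral"
  shows "inv\<^bsub>infinite_dihedral\<^esub> p = (fst p, - fst p * snd p)"
  using group.inv_equality[OF group_infinite_dihedral _ assms] assms
  by (auto simp: carrier_infinite_dihedral mult_infinite_dihedral)

lemma commutator_infinite_dihedral:
  assumes "p \<in> carrier infinite_dihedral" "q \<in> carrier infinite_dihedral"
  shows "p \<otimes>\<^bsub>infinite_dihedral\<^esub> q \<otimes>\<^bsub>infinite_dihedral\<^esub> inv\<^bsub>infinite_dihedral\<^esub> p
           \<otimes>\<^bsub>infinite_dihedral\<^esub> inv\<^bsub>infinite_dihedral\<^esub> q
       = (1, (1 - fst q) * snd p - (1 - fst p) * snd q)"
  using assms
  by (cases p, cases q)
    (auto simp: inv_infinite_dihedral carrier_infinite_dihedral mult_infinite_dihedral algebra_simps)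

definition dihedral_level :: "nat \<Rightarrow> (int \<times> int) set" where
  "dihedral_level k = {p \<in> carrier infinite_dihedral. 2 ^ k dvd snd p \<and> (k = 0 \<or> fst p = 1)}"

lemma subgroup_dihedral_level: "subgroup (dihedral_level k) infinite_dihedral"
proof (rule group.subgroupI[OF group_infinite_dihedral])
  fix p q
  assume p: "p \<in> dihedral_level k" and q: "q \<in> dihedral_level k"
  then have "2 ^ k dvd fst p * snd q + snd p"
    by (auto simp: dihedral_level_def carrier_infinite_dihedral)
  then show "p \<otimes>\<^bsub>infinite_dihedral\<^esub> q \<in> dihedral_level k"
    using p q by (auto simp: dihedral_level_def carrier_infinite_dihedral mult_infinite_dihedral)
  show "inv\<^bsub>infinite_dihedral\<^esub> p \<in> dihedral_level k"
    using p by (auto simp: dihedral_level_def carrier_infinite_dihedral inv_infinite_dihedral)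
next
  have "(1, 0) \<in> dihedral_level k"
    by (simp add: dihedral_level_def carrier_infinite_dihedral)
  then show "dihedral_level k \<noteq> {}"
    by blast
qed (auto simp: dihedral_level_def)

lemma two_power_dvd_one_minus_sign:
  "s = 1 \<or> s = -1 \<Longrightarrow> (2::int) ^ k dvd m \<Longrightarrow> 2 ^ Suc k dvd (1 - s) * m"
  by (auto simp: mult_dvd_mono)

lemma lower_central_infinite_dihedral:
  "lower_central infinite_dihedral k \<subseteq> dihedral_level k"
proof (induction k)
  case 0
  then show ?case
    by (auto simp: dihedral_level_def)
next
  case (Suc k)
  have "p \<otimes>\<^bsub>infinite_dihedral\<^esub> q \<otimes>\<^bsub>infinite_dihedral\<^esub> inv\<^bsub>infinite_dihedral\<^esub> p
          \<otimes>\<^bsub>infinite_dihedral\<^esub> inv\<^bsub>infinite_dihedral\<^esub> q \<in> dihedral_level (Suc k)"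
    if p: "p \<in> dihedral_level k" and q: "q \<in> carrier infinite_dihedral" for p q
  proof -
    have "2 ^ Suc k dvd (1 - fst q) * snd p"
      using p q by (intro two_power_dvd_one_minus_sign) (auto simp: dihedral_level_def carrier_infinite_dihedral)
    moreover have "2 ^ Suc k dvd (1 - fst p) * snd q"
      using p q two_power_dvd_one_minus_sign[of "fst p" 0 "snd q"]
      by (auto simp: dihedral_level_def carrier_infinite_dihedral)
    ultimately show ?thesis
      using p q by (simp add: commutator_infinite_dihedral dihedral_level_def carrier_infinite_dihedral)
  qed
  then have "commutator_set infinite_dihedral (lower_central infinite_dihedral k)
               (carrier infinite_dihedral) \<subseteq> dihedral_level (Suc k)"
    using Suc by (auto simp: commutator_set_subset_iff)
  then show ?case
    unfolding lower_central_Suc_commutator_set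
    by (rule group.generate_subgroup_incl[OF group_infinite_dihedral _ subgroup_dihedral_level])
qed

text \<open>The generators \<open>\<gamma>\<^sub>1\<close> and \<open>\<gamma>\<^sub>2\<close> go to the reflections \<open>x \<mapsto> -x\<close> and \<open>x \<mapsto> 1 - x\<close>, whose
  product is the translation by \<open>1\<close>; all other generators go to the identity.\<close>

definition dihedral_letter :: "nat \<times> bool \<Rightarrow> int \<times> int" where
  "dihedral_letter x = (if fst x = 0 then (-1, 0) else if fst x = 1 then (-1, 1) else (1, 0))"

definition dihedral_word :: "fg_word \<Rightarrow> int \<times> int" where
  "dihedral_word w = foldr (\<lambda>x p. dihedral_letter x \<otimes>\<^bsub>infinite_dihedral\<^esub> p) w (1, 0)"

lemma dihedral_word_Nil [simp]: "dihedral_word [] = (1, 0)"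
  by (simp add: dihedral_word_def)

lemma dihedral_word_Cons [simp]:
  "dihedral_word (x # w) = dihedral_letter x \<otimes>\<^bsub>infinite_dihedral\<^esub> dihedral_word w"
  by (simp add: dihedral_word_def)

lemma dihedral_word_append:
  "dihedral_word (u @ v) = dihedral_word u \<otimes>\<^bsub>infinite_dihedral\<^esub> dihedral_word v"
  by (induction u) (simp_all add: mult_infinite_dihedral algebra_simps)

lemma dihedral_word_in_carrier: "dihedral_word w \<in> carrier infinite_dihedral"
  by (induction w) (auto simp: carrier_infinite_dihedral mult_infinite_dihedral dihedral_letter_def)

lemma dihedral_word_cancel_cons:
  "dihedral_word (cancel_cons x ys) = dihedral_letter x \<otimes>\<^bsub>infinite_dihedral\<^esub> dihedral_word ys"
  by (cases ys) (auto simp: mult_infinite_dihedral dihedral_letter_def letter_inv_def algebra_simps)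

lemma dihedral_word_reduce: "dihedral_word (reduce w) = dihedral_word w"
proof -
  have "dihedral_word (foldr cancel_cons w ys) = dihedral_word (w @ ys)" for ys
    by (induction w) (simp_all add: dihedral_word_cancel_cons)
  from this[of "[]"] show ?thesis
    by (simp add: reduce_def)
qed

lemma group_hom_dihedral_word: "group_hom (free_group n) infinite_dihedral dihedral_word"
  by (auto simp: group_hom_def group_hom_axioms_def group_free_group group_infinite_dihedral hom_def
      mult_free_group dihedral_word_in_carrier dihedral_word_reduce dihedral_word_append)

primrec lcs_witness :: "nat \<Rightarrow> nat \<Rightarrow> fg_word" where
  "lcs_witness n 0 = [(1, True), (0, True)]"
| "lcs_witness n (Suc j) =
     lcs_witness n j \<otimes>\<^bsub>free_group n\<^esub> [(0, True)] \<otimes>\<^bsub>free_group n\<^esub>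
       inv\<^bsub>free_group n\<^esub> lcs_witness n j \<otimes>\<^bsub>free_group n\<^esub> inv\<^bsub>free_group n\<^esub> [(0, True)]"

lemma lcs_witness_lower_central:
  assumes "n \<ge> 2"
  shows "lcs_witness n j \<in> lower_central (free_group n) j
       \<and> dihedral_word (lcs_witness n j) = (1, 2 ^ j)"
proof (induction j)
  case 0
  show ?case
    using assms
    by (simp add: carrier_free_group mult_infinite_dihedral dihedral_letter_def letter_inv_def)
next
  case (Suc j)
  interpret \<phi>: group_hom "free_group n" infinite_dihedral dihedral_word
    by (rule group_hom_dihedral_word)
  have a: "[(0, True)] \<in> carrier (free_group n)"
    using assms by (simp add: carrier_free_group)
  have w: "lcs_witness n j \<in> lower_central (free_group n) j"
    and \<phi>w: "dihedral_word (lcs_witness n j) = (1, 2 ^ j)"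
    using Suc by auto
  have wG: "lcs_witness n j \<in> carrier (free_group n)"
    using w \<phi>.G.lower_central_subset_carrier by blast
  have "dihedral_word (lcs_witness n (Suc j))
      = (1, (1 - fst (dihedral_word [(0, True)])) * 2 ^ j)"
    using commutator_infinite_dihedral[OF \<phi>.hom_closed[OF wG] \<phi>.hom_closed[OF a]] wG a \<phi>w
    by simp
  moreover have "lcs_witness n (Suc j) \<in> lower_central (free_group n) (Suc j)"
    unfolding lower_central_Suc_commutator_set
    using w a by (auto simp: commutator_set_def intro: generate.incl)
  ultimately show ?case
    by (simp add: mult_infinite_dihedral dihedral_letter_def)
qed

lemma lower_central_free_group_strict:
  assumes "n \<ge> 2"
  shows "\<not> lower_central (free_group n) j \<subseteq> lower_central (free_group n) (Suc j)"
proof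
  interpret \<phi>: group_hom "free_group n" infinite_dihedral dihedral_word
    by (rule group_hom_dihedral_word)
  assume "lower_central (free_group n) j \<subseteq> lower_central (free_group n) (Suc j)"
  then have "dihedral_word (lcs_witness n j) \<in> dihedral_level (Suc j)"
    using lcs_witness_lower_central[OF assms] \<phi>.image_lower_central_subset
      lower_central_infinite_dihedral
    by blast
  then have "(2::int) ^ Suc j dvd 2 ^ j"
    using lcs_witness_lower_central[OF assms] by (simp add: dihedral_level_def)
  then show False
    by (simp add: zdvd_imp_le[THEN leD])
qed

lemma not_nilpotent_Mod_lower_central_Inter:
  assumes "n \<ge> 2"
  shows "\<not> nilpotent_grp (free_group n Mod (\<Inter>k. lower_central (free_group n) k))"
proof -
  interpret group "free_group n"
    by (rule group_free_group)
  interpret normal "\<Inter>k. lower_central (free_group n) k" "free_group n"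
    by (rule normal_INT[OF lower_central_normal])
  have "\<not> lower_central (free_group n) k \<subseteq> (\<Inter>k. lower_central (free_group n) k)" for k
    using lower_central_free_group_strict[OF assms, of k] by blast
  then show ?thesis
    by (simp add: nilpotent_grp_Mod_iff)
qed

section \<open>Topology\<close>

abbreviation bool_product_topology :: "('a \<Rightarrow> bool) topology" where
  "bool_product_topology \<equiv> product_topology (\<lambda>_. discrete_topology UNIV) UNIV"

lemma topspace_bool_product_topology [simp]: "topspace bool_product_topology = UNIV"
  by (simp add: PiE_UNIV_domain)

lemma clopen_cylinder:
  assumes "finite C"
  shows "openin bool_product_topology {P. \<forall>w\<in>C. P w} \<and> closedin bool_product_topology {P. \<forall>w\<in>C. P w}"
  using assms
proof (induction C rule: finite_induct)
  case empty
  then show ?case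
    using openin_topspace[of bool_product_topology] closedin_topspace[of bool_product_topology]
    by simp
next
  case (insert w C)
  have proj: "continuous_map bool_product_topology (discrete_topology UNIV) (\<lambda>P. P w)"
    by (rule continuous_map_product_projection) simp
  have "{P. P w} = {P \<in> topspace bool_product_topology. P w \<in> {True}}"
    by simp
  moreover have "openin bool_product_topology {P \<in> topspace bool_product_topology. P w \<in> {True}}"
    using proj by (rule openin_continuous_map_preimage) simp
  moreover have "closedin bool_product_topology {P \<in> topspace bool_product_topology. P w \<in> {True}}"
    using proj by (rule closedin_continuous_map_preimage) simp
  moreover have "{P. \<forall>w'\<in>insert w C. P w'} = {P. P w} \<inter> {P. \<forall>w\<in>C. P w}"
    by auto
  ultimately show ?case
    using insert.IH by (simp add: openin_Int closedin_Int)
qed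

lemma continuous_map_bool_product:
  assumes "\<And>w. openin Z {y \<in> topspace Z. f y w}" and "\<And>w. closedin Z {y \<in> topspace Z. f y w}"
  shows "continuous_map Z bool_product_topology f"
  unfolding continuous_map_componentwise_UNIV
proof
  fix w
  have "openin Z {y \<in> topspace Z. f y w \<in> S}" for S :: "bool set"
  proof -
    have "f y w \<in> S \<longleftrightarrow> (f y w \<and> True \<in> S) \<or> (\<not> f y w \<and> False \<in> S)" for y
      by (cases "f y w") auto
    then have "{y \<in> topspace Z. f y w \<in> S}
        = (if True \<in> S then {y \<in> topspace Z. f y w} else {})
          \<union> (if False \<in> S then topspace Z - {y \<in> topspace Z. f y w} else {})"
      by auto
    then show ?thesis
      using assms by auto
  qed
  then show "continuous_map Z (discrete_topology UNIV) (\<lambda>y. f y w)"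
    by (simp add: continuous_map_def)
qed

lemma second_countable_if_separable_metrizable:
  assumes "metrizable_space Z" "separable_space Z"
  shows "second_countable Z"
proof -
  obtain M d where "Metric_space M d" and Z: "Z = Metric_space.mtopology M d"
    using assms(1) by (auto simp: metrizable_space_def)
  interpret Metric_space M d by fact
  obtain C where C: "countable C" "Abstract_Topology.closure_of Z C = topspace Z"
    using assms(2) by (auto simp: separable_space_def)
  have dense: "\<exists>c\<in>C. c \<in> T" if "x \<in> M" "openin mtopology T" "x \<in> T" for x T
  proof -
    have "x \<in> Abstract_Topology.closure_of Z C"
      using C(2) that(1) Z by simp
    then show ?thesis
      using that Z unfolding in_closure_of by blast
  qed
  define \<B> where "\<B> = (\<lambda>(c, k). mball c (1 / Suc k)) ` (C \<times> UNIV)"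
  have base: "\<exists>B\<in>\<B>. x \<in> B \<and> B \<subseteq> U" if U: "openin mtopology U" and xU: "x \<in> U" for U x
  proof -
    from U have UM: "U \<subseteq> M" and "\<And>x. x \<in> U \<Longrightarrow> \<exists>r>0. mball x r \<subseteq> U"
      unfolding openin_mtopology by auto
    then obtain r where r: "r > 0" "mball x r \<subseteq> U"
      using xU by blast
    obtain k :: nat where "2 / r < k"
      using reals_Archimedean2 by blast
    then have "2 < r * Suc k"
      using r(1) by (simp add: field_simps)
    then have kr: "2 / Suc k < r"
      by (simp add: field_simps)
    have x: "x \<in> M"
      using UM xU by blast
    then have "\<exists>c\<in>C. c \<in> mball x (1 / Suc k)"
      using dense[of x "mball x (1 / Suc k)"] by simp
    then obtain c where c: "c \<in> C" "c \<in> mball x (1 / Suc k)"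
      by blast
    have "mball c (1 / Suc k) \<subseteq> mball x r"
    proof
      fix y
      assume y: "y \<in> mball c (1 / Suc k)"
      have "d x y \<le> d x c + d c y"
        using c y by (intro triangle) auto
      also have "\<dots> < 1 / Suc k + 1 / Suc k"
        using c y by (intro add_strict_mono) auto
      also have "\<dots> < r"
        using kr by simp
      finally show "y \<in> mball x r"
        using x y by simp
    qed
    moreover have "x \<in> mball c (1 / Suc k)"
      using c by (auto simp: commute)
    ultimately show ?thesis
      using c r unfolding \<B>_def by blast
  qed
  moreover have "countable \<B>"
    using C(1) by (simp add: \<B>_def)
  moreover have "\<forall>B\<in>\<B>. openin mtopology B"
    by (auto simp: \<B>_def)
  ultimately show ?thesis
    unfolding second_countable_def Z by blast
qed

lemma openin_Union_clopen_seq: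
  assumes "second_countable Z" "Z dim_le 0" "openin Z U"
  shows "\<exists>V :: nat \<Rightarrow> 'a set. (\<forall>i. openin Z (V i) \<and> closedin Z (V i)) \<and> (\<Union>i. V i) = U"
proof -
  define \<U> where "\<U> = {V. openin Z V \<and> closedin Z V \<and> V \<subseteq> U}"
  have "U \<subseteq> \<Union>\<U>"
  proof
    fix x
    assume "x \<in> U"
    then obtain V where "closedin Z V" "openin Z V" "x \<in> V" "V \<subseteq> U"
      using assms(2,3) unfolding dimension_le_0_neighbourhood_base_of_clopen neighbourhood_base_of
      by blast
    then show "x \<in> \<Union>\<U>"
      unfolding \<U>_def by blast
  qed
  then have U: "\<Union>\<U> = U"
    by (auto simp: \<U>_def)
  have "Lindelof_space (subtopology Z U)"
    by (simp add: assms(1) second_countable_imp_Lindelof_space second_countable_subtopology)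
  moreover have "openin (subtopology Z U) V" if "V \<in> \<U>" for V
    using openin_subtopology_Int2[of Z V U] that by (simp add: \<U>_def Int_absorb1)
  moreover have "topspace (subtopology Z U) = U"
    using assms(3) openin_subset topspace_subtopology_subset by metis
  ultimately have "\<exists>\<V>. countable \<V> \<and> \<V> \<subseteq> \<U> \<and> \<Union>\<V> = U"
    using Lindelof_spaceD[of "subtopology Z U" \<U>] U by simp
  then obtain \<V> where \<V>: "countable \<V>" "\<V> \<subseteq> \<U>" "\<Union>\<V> = U"
    by blast
  show ?thesis
  proof (cases "\<V> = {}")
    case True
    then show ?thesis
      using \<V>(3) by (intro exI[of _ "\<lambda>_. {}"]) simp
  next
    case False
    have "from_nat_into \<V> i \<in> \<U>" for i
      using from_nat_into[OF False] \<V>(2) by blast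
    then have "openin Z (from_nat_into \<V> i)" "closedin Z (from_nat_into \<V> i)" for i
      by (simp_all add: \<U>_def)
    moreover have "(\<Union>i. from_nat_into \<V> i) = U"
      using range_from_nat_into[OF False \<V>(1)] \<V>(3) by simp
    ultimately show ?thesis
      by (intro exI[of _ "from_nat_into \<V>"]) simp
  qed
qed

definition level_map :: "(nat \<Rightarrow> 'a set) \<Rightarrow> (nat \<Rightarrow> 'b set) \<Rightarrow> 'a \<Rightarrow> 'b \<Rightarrow> bool" where
  "level_map V L y = (if \<exists>i. y \<in> V i then (\<lambda>w. w \<in> L (LEAST i. y \<in> V i)) else (\<lambda>w. \<forall>i. w \<in> L i))"

lemma level_map_in_Union: "y \<in> (\<Union>i. V i) \<Longrightarrow> \<exists>i. Collect (level_map V L y) = L i"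
  by (auto simp: level_map_def)

lemma level_map_notin_Union: "y \<notin> (\<Union>i. V i) \<Longrightarrow> Collect (level_map V L y) = (\<Inter>i. L i)"
  by (auto simp: level_map_def)

lemma continuous_map_level_map:
  assumes L: "decseq L" and V: "\<And>i. openin Z (V i)" "\<And>i. closedin Z (V i)"
  shows "continuous_map Z bool_product_topology (level_map V L)"
proof (rule continuous_map_bool_product)
  fix w
  have "openin Z {y \<in> topspace Z. level_map V L y w} \<and> closedin Z {y \<in> topspace Z. level_map V L y w}"
  proof (cases "\<forall>i. w \<in> L i")
    case True
    then have "{y \<in> topspace Z. level_map V L y w} = topspace Z"
      by (auto simp: level_map_def)
    then show ?thesis
      by simp
  next
    case False
    define M where "M = (LEAST m. w \<notin> L m)"
    have wL: "w \<in> L m \<longleftrightarrow> m < M" for m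
    proof
      assume "m < M"
      then show "w \<in> L m"
        using not_less_Least[of m "\<lambda>m. w \<notin> L m"] unfolding M_def by simp
    next
      assume w: "w \<in> L m"
      have "\<exists>m. w \<notin> L m"
        using False by simp
      then have "w \<notin> L M"
        unfolding M_def by (rule LeastI_ex)
      show "m < M"
      proof (rule ccontr)
        assume "\<not> m < M"
        then have "L m \<subseteq> L M"
          using L by (simp add: decseqD)
        with w \<open>w \<notin> L M\<close> show False
          by blast
      qed
    qed
    have "level_map V L y w \<longleftrightarrow> (\<exists>i<M. y \<in> V i)" for y
    proof (cases "\<exists>i. y \<in> V i")
      case True
      define \<mu> where "\<mu> = (LEAST i. y \<in> V i)"
      have "y \<in> V \<mu>"
        using True unfolding \<mu>_def by (rule LeastI_ex)
      moreover have "\<mu> \<le> i" if "y \<in> V i" for i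
        using that unfolding \<mu>_def by (rule Least_le)
      ultimately have "(\<exists>i<M. y \<in> V i) \<longleftrightarrow> \<mu> < M"
        by (meson le_less_trans)
      then show ?thesis
        using True wL by (simp add: level_map_def \<mu>_def)
    next
      case False
      then show ?thesis
        using \<open>\<not> (\<forall>i. w \<in> L i)\<close> by (simp add: level_map_def)
    qed
    moreover have "(\<Union>i<M. V i) \<subseteq> topspace Z"
      by (simp add: UN_subset_iff openin_subset[OF V(1)])
    ultimately have "{y \<in> topspace Z. level_map V L y w} = (\<Union>i<M. V i)"
      by auto
    then show ?thesis
      using V closedin_Union[of "V ` {..<M}" Z] by auto
  qed
  then show "openin Z {y \<in> topspace Z. level_map V L y w}"
    and "closedin Z {y \<in> topspace Z. level_map V L y w}"
    by auto
qed

section \<open>The space of marked groups\<close>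

lemma nilpotent_class_le_points_eq:
  "{P \<in> Gn_points n. nilpotent_class_le (free_group n Mod {w. P w}) k}
     = Gn_points n \<inter> {P. \<forall>w\<in>iterated_commutators (free_group n) (free_generators n) k. P w}"
proof -
  interpret group "free_group n"
    by (rule group_free_group)
  have "nilpotent_class_le (free_group n Mod {w. P w}) k
      \<longleftrightarrow> iterated_commutators (free_group n) (free_generators n) k \<subseteq> {w. P w}"
    if "P \<in> Gn_points n" for P
  proof -
    have N: "{w. P w} \<lhd> free_group n"
      using that by (simp add: Gn_points_def)
    then have "nilpotent_class_le (free_group n Mod {w. P w}) k
        \<longleftrightarrow> lower_central (free_group n) k \<subseteq> {w. P w}"
      by (rule normal.nilpotent_class_le_Mod_iff)
    also have "\<dots> \<longleftrightarrow> iterated_commutators (free_group n) (free_generators n) k \<subseteq> {w. P w}"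
      by (rule lower_central_subset_iff_iterated_commutators[OF free_generators_subset
            generate_free_generators N])
    finally show ?thesis .
  qed
  then show ?thesis
    by auto
qed

lemma clopen_nilpotent_class_le_points:
  "clopenin (Gn_top n) {P \<in> Gn_points n. nilpotent_class_le (free_group n Mod {w. P w}) k}"
  unfolding clopenin_def nilpotent_class_le_points_eq Gn_top_def
  using clopen_cylinder[OF finite_iterated_commutators[OF finite_free_generators]]
  by (auto intro: openin_subtopology_Int2 closedin_subtopology_Int_closed)

lemma nilpotent_points_reduction:
  fixes Z :: "'a topology"
  assumes "n \<ge> 2" "zero_dim_Polish Z" "openin Z U"
  shows "\<exists>f. continuous_map Z (Gn_top n) f
           \<and> {y \<in> topspace Z. f y \<in> {P \<in> Gn_points n. nilpotent_grp (free_group n Mod {w. P w})}} = U"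
proof -
  interpret group "free_group n"
    by (rule group_free_group)
  have sc: "second_countable Z" and dim: "Z dim_le 0"
    using assms(2)
    by (auto simp: zero_dim_Polish_def Polish_top_def
        intro: second_countable_if_separable_metrizable completely_metrizable_imp_metrizable_space)
  obtain V :: "nat \<Rightarrow> 'a set"
    where clopen: "\<forall>i. openin Z (V i) \<and> closedin Z (V i)" and V: "(\<Union>i. V i) = U"
    using openin_Union_clopen_seq[OF sc dim assms(3)] by blast
  define f where "f = level_map V (lower_central (free_group n))"
  have f_in: "\<exists>i. Collect (f y) = lower_central (free_group n) i" if "y \<in> U" for y
    using level_map_in_Union[of y V "lower_central (free_group n)"] that V by (simp add: f_def)
  have f_notin: "Collect (f y) = (\<Inter>i. lower_central (free_group n) i)" if "y \<notin> U" for y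
    using level_map_notin_Union[of y V "lower_central (free_group n)"] that V by (simp add: f_def)
  have points: "f y \<in> Gn_points n" for y
  proof (cases "y \<in> U")
    case True
    then obtain i where "Collect (f y) = lower_central (free_group n) i"
      using f_in by blast
    then show ?thesis
      using lower_central_normal by (simp add: Gn_points_def)
  next
    case False
    then show ?thesis
      using f_notin normal_INT[OF lower_central_normal] by (simp add: Gn_points_def)
  qed
  have nilpotent: "nilpotent_grp (free_group n Mod Collect (f y)) \<longleftrightarrow> y \<in> U" for y
  proof (cases "y \<in> U")
    case True
    then obtain i where i: "Collect (f y) = lower_central (free_group n) i"
      using f_in by blast
    interpret normal "lower_central (free_group n) i" "free_group n"
      by (rule lower_central_normal)
    show ?thesis
      using True by (simp add: i nilpotent_grp_Mod_iff exI[of _ i])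
  next
    case False
    then show ?thesis
      using f_notin not_nilpotent_Mod_lower_central_Inter[OF assms(1)] by simp
  qed
  have "continuous_map Z bool_product_topology f"
    unfolding f_def using clopen by (intro continuous_map_level_map decseq_lower_central) auto
  then have "continuous_map Z (Gn_top n) f"
    using points by (simp add: Gn_top_def continuous_map_in_subtopology image_subset_iff)
  moreover have "{y \<in> topspace Z. f y \<in> {P \<in> Gn_points n. nilpotent_grp (free_group n Mod {w. P w})}} = U"
    using points nilpotent openin_subset[OF assms(3)] by blast
  ultimately show ?thesis
    by (intro exI[of _ f] conjI)
qed

theorem mainTheorem9:
  fixes n :: nat
  assumes "n > 1"
  shows "(\<forall>k\<ge>1. clopenin (Gn_top n)
            {P \<in> Gn_points n. nilpotent_class_le (free_group n Mod {w. P w}) k})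
       \<and> Sigma01_complete TYPE('y) (Gn_top n)
            {P \<in> Gn_points n. nilpotent_grp (free_group n Mod {w. P w})}"
proof -
  have "{P \<in> Gn_points n. nilpotent_grp (free_group n Mod {w. P w})}
      = (\<Union>k. {P \<in> Gn_points n. nilpotent_class_le (free_group n Mod {w. P w}) k})"
    by (auto simp: nilpotent_grp_def)
  then have "openin (Gn_top n) {P \<in> Gn_points n. nilpotent_grp (free_group n Mod {w. P w})}"
    using clopen_nilpotent_class_le_points by (auto simp: clopenin_def)
  moreover have "\<exists>f. continuous_map Z (Gn_top n) f
      \<and> {y \<in> topspace Z. f y \<in> {P \<in> Gn_points n. nilpotent_grp (free_group n Mod {w. P w})}} = U"
    if "zero_dim_Polish Z \<and> openin Z U" for Z :: "'y topology" and U
    using assms that by (intro nilpotent_points_reduction) auto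
  ultimately have "Sigma01_complete TYPE('y) (Gn_top n)
      {P \<in> Gn_points n. nilpotent_grp (free_group n Mod {w. P w})}"
    unfolding Sigma01_complete_def by blast
  then show ?thesis
    using clopen_nilpotent_class_le_points by blast
qed

end
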